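(* Let $n\ge2$ and let $T_0$ be a tagged $n$-simplex in $\mathbb R^n$. Every simplex $T$ obtained from $T_0$ by successive applications of Maubach's bisection satisfies $\gamma(T)\le 2n(n+\sqrt2-1)\,\gamma(T_0)$.
   Context: A tagged $n$-simplex is an ordered tuple of affinely independent vertices with a tag, written $[v_0,\dots,v_n]_\gamma$, $\gamma\in\{1,\dots,n\}$. Maubach's bisection: set $v'=(v_0+v_\gamma)/2$ and $\gamma'=\gamma-1$ if $\gamma\ge2$, $\gamma'=n$ if $\gamma=1$; the children are $[v_0,\dots,v_{\gamma-1},v',v_{\gamma+1},\dots,v_n]_{\gamma'}$ and $[v_1,\dots,v_\gamma,v',v_{\gamma+1},\dots,v_n]_{\gamma'}$. For a simplex $S$, $\gamma(S)=R(S)/r(S)$ where $R(S)$ is the diameter of the smallest ball containing $S$ and $r(S)$ the diameter of the largest ball contained in $S$. *)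

theory Defs
  imports "HOL-Analysis.Analysis"
begin

text \<open>A tagged n-simplex in R^n is represented by the list of its vertices
  [v_0,...,v_n] (0-indexed, length n+1) together with its tag gamma.\<close>

definition tagged_simplex :: "(real^'n) list \<Rightarrow> nat \<Rightarrow> bool" where
  "tagged_simplex vs g \<longleftrightarrow>
     length vs = CARD('n) + 1 \<and> distinct vs \<and> \<not> affine_dependent (set vs) \<and>
     1 \<le> g \<and> g \<le> CARD('n)"

definition maubach_mid :: "(real^'n) list \<Rightarrow> nat \<Rightarrow> real^'n" where
  "maubach_mid vs g = (1/2) *\<^sub>R (vs ! 0 + vs ! g)"

definition maubach_tag :: "(real^'n) list \<Rightarrow> nat \<Rightarrow> nat" where
  "maubach_tag vs g = (if 2 \<le> g then g - 1 else length vs - 1)"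

text \<open>First child [v_0,...,v_{gamma-1}, v', v_{gamma+1},...,v_n].\<close>
definition maubach_child1 :: "(real^'n) list \<Rightarrow> nat \<Rightarrow> (real^'n) list \<times> nat" where
  "maubach_child1 vs g = (take g vs @ [maubach_mid vs g] @ drop (g + 1) vs, maubach_tag vs g)"

text \<open>Second child [v_1,...,v_gamma, v', v_{gamma+1},...,v_n].\<close>
definition maubach_child2 :: "(real^'n) list \<Rightarrow> nat \<Rightarrow> (real^'n) list \<times> nat" where
  "maubach_child2 vs g = (drop 1 (take (g + 1) vs) @ [maubach_mid vs g] @ drop (g + 1) vs, maubach_tag vs g)"

inductive maubach_descendant :: "(real^'n) list \<times> nat \<Rightarrow> (real^'n) list \<times> nat \<Rightarrow> bool"
  for T0 where
  self: "maubach_descendant T0 T0"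
| child1: "maubach_descendant T0 (vs, g) \<Longrightarrow> maubach_descendant T0 (maubach_child1 vs g)"
| child2: "maubach_descendant T0 (vs, g) \<Longrightarrow> maubach_descendant T0 (maubach_child2 vs g)"

definition outer_diam :: "(real^'n) set \<Rightarrow> real" where
  "outer_diam S = 2 * Inf {r. \<exists>c. S \<subseteq> cball c r}"

definition inner_diam :: "(real^'n) set \<Rightarrow> real" where
  "inner_diam S = 2 * Sup {r. \<exists>c. 0 \<le> r \<and> cball c r \<subseteq> S}"

definition shape_ratio :: "(real^'n) list \<Rightarrow> real" where
  "shape_ratio vs = outer_diam (convex hull (set vs)) / inner_diam (convex hull (set vs))"

end

theory Submission
  imports Defs
begin

(* Write a tagged simplex [v_0,...,v_n]_g as v_i = w + c_g(i) (D_1 + ... + D_i), where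
   c_g(i) = 1 for i <= g and c_g(i) = 1/2 for i > g.  In these coordinates Maubach's bisection
   keeps the edge vectors D_j (first child) or rotates the first g of them, flipping the sign of
   one (second child), and halves all of them when the tag wraps around from 1 to n.  Hence every
   descendant T of T_0 has edge vectors D_j = t s_j D0_(pi j) with t > 0, s_j = +-1 and pi a
   permutation.

   The circumscribed ball gives R(T) <= sum_j c_g(j) |D_j|.  The barycentric coordinates of T are
   affine functions whose Lipschitz constants L_i are controlled by the dual frame Phi_j of the
   D_j; they stay nonnegative on the ball of radius 1 / sum_i L_i around the point where they are
   proportional to the L_i, so r(T) >= 2 / sum_i L_i, and sum_i L_i <= 5/2 sum_j |Phi_j| / c_g(j).
   For T_0 itself, c_g0(l) |D0_l| <= R(T_0) (an edge-parallel chord) and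
   |Phi0_l| <= c_g0(l) / r(T_0) (a slab of width c_g0(l) / |Phi0_l| contains T_0).  Combining
   these with q_j = c_g(j) / c_g0(pi j), which lies in [1/2, 2], gives
   gamma(T) <= 5/4 (sum_j q_j) (sum_j 1/q_j) gamma(T_0), and
   Schweitzer's inequality bounds this by 125/64 n^2 gamma(T_0) <= 2n(n + sqrt 2 - 1) gamma(T_0). *)

section \<open>Maubach coordinates and bisection\<close>

definition tag_weight :: "nat \<Rightarrow> nat \<Rightarrow> real" where
  "tag_weight g i = (if i \<le> g then 1 else 1/2)"

definition maubach_coords :: "(real^'n) list \<Rightarrow> nat \<Rightarrow> real^'n \<Rightarrow> (nat \<Rightarrow> real^'n) \<Rightarrow> bool" where
  "maubach_coords vs g w D \<longleftrightarrow> length vs = CARD('n) + 1 \<and>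
     (\<forall>i\<le>CARD('n). vs ! i = w + tag_weight g i *\<^sub>R (\<Sum>j=1..i. D j))"

lemma tag_weight_pos: "0 < tag_weight g i"
  unfolding tag_weight_def by auto

lemma tag_weight_nonzero [simp]: "tag_weight g i \<noteq> 0"
  unfolding tag_weight_def by auto

lemma tag_weight_antimono: "i \<le> j \<Longrightarrow> tag_weight g j \<le> tag_weight g i"
  unfolding tag_weight_def by auto

lemma set_conv_nth_atLeastAtMost: "length vs = m + 1 \<Longrightarrow> set vs = (\<lambda>i. vs ! i) ` {0..m}"
  by (auto simp: set_conv_nth less_Suc_eq_le)

lemma maubach_coords_length: "maubach_coords vs g w D \<Longrightarrow> length vs = CARD('n) + 1"
  for vs :: "(real^'n) list"
  unfolding maubach_coords_def by auto

lemma maubach_coords_base: "maubach_coords vs g w D \<Longrightarrow> vs ! 0 = w"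
  unfolding maubach_coords_def by auto

lemma maubach_coords_vertex:
  "maubach_coords vs g w D \<Longrightarrow> i \<le> CARD('n) \<Longrightarrow> vs ! i = w + tag_weight g i *\<^sub>R (\<Sum>j=1..i. D j)"
  for vs :: "(real^'n) list"
  unfolding maubach_coords_def by auto

lemma maubach_coords_set:
  fixes vs :: "(real^'n) list"
  assumes "maubach_coords vs g w D" "x \<in> set vs"
  obtains i where "i \<le> CARD('n)" "x = vs ! i"
proof -
  from assms(2) obtain i where "i < length vs" "x = vs ! i" by (auto simp: in_set_conv_nth)
  then show thesis using that maubach_coords_length[OF assms(1)] by (simp add: less_Suc_eq_le)
qed

lemma maubach_tag_range:
  assumes "1 \<le> g" "g \<le> CARD('n)" "length vs = CARD('n) + 1"
  shows "1 \<le> maubach_tag vs g" "maubach_tag vs g \<le> CARD('n)"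
  using assms unfolding maubach_tag_def by auto

lemma midpoint_translate:
  fixes a b :: "'a::real_vector"
  shows "(1/2) *\<^sub>R (a + (a + b)) = a + (1/2) *\<^sub>R b"
  by (simp add: algebra_simps flip: scaleR_2)

lemma half_rebase:
  fixes w d S :: "'a::real_vector"
  shows "w + (1/2) *\<^sub>R S = (w + d) + (1/2) *\<^sub>R (S - 2 *\<^sub>R d)"
  by (simp add: algebra_simps)

lemma maubach_child1_coords:
  fixes vs :: "(real^'n) list"
  assumes coords: "maubach_coords vs g w D" and g: "2 \<le> g" "g \<le> CARD('n)"
  shows "maubach_coords (fst (maubach_child1 vs g)) (snd (maubach_child1 vs g)) w D"
proof -
  have len: "length vs = CARD('n) + 1" using maubach_coords_length[OF coords] .
  have child: "maubach_child1 vs g = (vs[g := maubach_mid vs g], g - 1)"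
    using upd_conv_take_nth_drop[of g vs] len g
    unfolding maubach_child1_def maubach_tag_def by auto
  have "vs ! g = w + (\<Sum>j=1..g. D j)"
    using maubach_coords_vertex[OF coords, of g] g by (simp add: tag_weight_def)
  then have mid: "maubach_mid vs g = w + (1/2) *\<^sub>R (\<Sum>j=1..g. D j)"
    by (simp only: maubach_mid_def maubach_coords_base[OF coords] midpoint_translate)
  have "vs[g := maubach_mid vs g] ! i = w + tag_weight (g - 1) i *\<^sub>R (\<Sum>j=1..i. D j)"
    if "i \<le> CARD('n)" for i
  proof (cases "i = g")
    case True
    then show ?thesis using len g mid by (simp add: tag_weight_def)
  next
    case False
    then have "tag_weight (g - 1) i = tag_weight g i" unfolding tag_weight_def by auto
    then show ?thesis using False that maubach_coords_vertex[OF coords] by simp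
  qed
  then show ?thesis using len unfolding child maubach_coords_def by simp
qed

lemma maubach_child1_coords_tag1:
  fixes vs :: "(real^'n) list"
  assumes coords: "maubach_coords vs 1 w D"
  shows "maubach_coords (fst (maubach_child1 vs 1)) (snd (maubach_child1 vs 1)) w
           (\<lambda>j. (1/2) *\<^sub>R D j)"
proof -
  have len: "length vs = CARD('n) + 1" using maubach_coords_length[OF coords] .
  have child: "maubach_child1 vs 1 = (vs[1 := maubach_mid vs 1], CARD('n))"
    using upd_conv_take_nth_drop[of 1 vs] len
    unfolding maubach_child1_def maubach_tag_def by auto
  have "vs ! 1 = w + D 1"
    using maubach_coords_vertex[OF coords, of 1] by (simp add: tag_weight_def)
  then have mid: "maubach_mid vs 1 = w + (1/2) *\<^sub>R D 1"
    by (simp only: maubach_mid_def maubach_coords_base[OF coords] midpoint_translate)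
  have "vs[1 := maubach_mid vs 1] ! i = w + tag_weight CARD('n) i *\<^sub>R (\<Sum>j=1..i. (1/2) *\<^sub>R D j)"
    if i: "i \<le> CARD('n)" for i
  proof -
    have "tag_weight CARD('n) i = 1" using i unfolding tag_weight_def by simp
    moreover consider "i = 0" | "i = 1" | "2 \<le> i" by linarith
    then have "vs[1 := maubach_mid vs 1] ! i = w + (1/2) *\<^sub>R (\<Sum>j=1..i. D j)"
    proof cases
      case 3
      then show ?thesis using len i maubach_coords_vertex[OF coords, of i] by (simp add: tag_weight_def)
    qed (use len mid maubach_coords_base[OF coords] in auto)
    ultimately show ?thesis by (simp add: scaleR_sum_right)
  qed
  then show ?thesis using len unfolding child maubach_coords_def by simp
qed

definition cycle_flip :: "nat \<Rightarrow> (nat \<Rightarrow> 'a::real_vector) \<Rightarrow> nat \<Rightarrow> 'a" where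
  "cycle_flip g D j = (if j < g then D (j + 1) else if j = g then - D 1 else D j)"

lemma sum_cycle_flip:
  fixes D :: "nat \<Rightarrow> 'a::real_vector"
  assumes "1 \<le> g"
  shows "(\<Sum>j=1..k. cycle_flip g D j) =
    (if k < g then (\<Sum>j=1..k+1. D j) - D 1 else (\<Sum>j=1..k. D j) - 2 *\<^sub>R D 1)"
proof (induction k)
  case 0
  then show ?case using assms by simp
next
  case (Suc k)
  consider "Suc k < g" | "Suc k = g" | "g < Suc k" by linarith
  then show ?case
    using Suc by cases (auto simp: cycle_flip_def algebra_simps scaleR_2)
qed

lemma nth_maubach_child2:
  assumes "g < length vs" "i < length vs"
  shows "fst (maubach_child2 vs g) ! i =
    (if i < g then vs ! (i + 1) else if i = g then maubach_mid vs g else vs ! i)"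
  using assms unfolding maubach_child2_def by (auto simp: nth_append min_def)

lemma length_maubach_child2:
  "g < length vs \<Longrightarrow> length (fst (maubach_child2 vs g)) = length vs"
  unfolding maubach_child2_def by simp

lemma maubach_child2_coords:
  fixes vs :: "(real^'n) list"
  assumes coords: "maubach_coords vs g w D" and g: "2 \<le> g" "g \<le> CARD('n)"
  shows "maubach_coords (fst (maubach_child2 vs g)) (snd (maubach_child2 vs g))
           (w + D 1) (cycle_flip g D)"
proof -
  have len: "length vs = CARD('n) + 1" using maubach_coords_length[OF coords] .
  have tag: "snd (maubach_child2 vs g) = g - 1"
    using g unfolding maubach_child2_def maubach_tag_def by simp
  have vertex: "vs ! i = w + tag_weight g i *\<^sub>R (\<Sum>j=1..i. D j)" if "i \<le> CARD('n)" for i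
    using maubach_coords_vertex[OF coords that] .
  have "vs ! g = w + (\<Sum>j=1..g. D j)" using vertex[of g] g by (simp add: tag_weight_def)
  then have mid: "maubach_mid vs g = w + (1/2) *\<^sub>R (\<Sum>j=1..g. D j)"
    by (simp only: maubach_mid_def maubach_coords_base[OF coords] midpoint_translate)
  have flip: "(\<Sum>j=1..k. cycle_flip g D j) =
      (if k < g then (\<Sum>j=1..k+1. D j) - D 1 else (\<Sum>j=1..k. D j) - 2 *\<^sub>R D 1)" for k
    using sum_cycle_flip[of g D k] g by simp
  have "fst (maubach_child2 vs g) ! i =
      (w + D 1) + tag_weight (g - 1) i *\<^sub>R (\<Sum>j=1..i. cycle_flip g D j)"
    if i: "i \<le> CARD('n)" for i
  proof -
    consider "i < g" | "i = g" | "g < i" by linarith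
    then show ?thesis
    proof cases
      case 1
      have "vs ! (i + 1) = w + (\<Sum>j=1..i+1. D j)"
        using vertex[of "i + 1"] 1 g by (simp add: tag_weight_def)
      moreover have "(\<Sum>j=1..i. cycle_flip g D j) = (\<Sum>j=1..i+1. D j) - D 1"
        using flip[of i] 1 by simp
      moreover have "tag_weight (g - 1) i = 1" using 1 by (simp add: tag_weight_def)
      ultimately show ?thesis using 1 g by (simp add: nth_maubach_child2 len)
    next
      case 2
      have "fst (maubach_child2 vs g) ! i = maubach_mid vs g"
        using 2 g by (simp add: nth_maubach_child2 len)
      also have "\<dots> = (w + D 1) + (1/2) *\<^sub>R ((\<Sum>j=1..g. D j) - 2 *\<^sub>R D 1)"
        unfolding mid by (rule half_rebase)
      also have "\<dots> = (w + D 1) + tag_weight (g - 1) i *\<^sub>R (\<Sum>j=1..i. cycle_flip g D j)"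
        using 2 g flip[of g] by (simp add: tag_weight_def)
      finally show ?thesis .
    next
      case 3
      have "fst (maubach_child2 vs g) ! i = w + (1/2) *\<^sub>R (\<Sum>j=1..i. D j)"
        using 3 i vertex[of i] by (simp add: nth_maubach_child2 len tag_weight_def)
      also have "\<dots> = (w + D 1) + (1/2) *\<^sub>R ((\<Sum>j=1..i. D j) - 2 *\<^sub>R D 1)"
        by (rule half_rebase)
      also have "\<dots> = (w + D 1) + tag_weight (g - 1) i *\<^sub>R (\<Sum>j=1..i. cycle_flip g D j)"
        using 3 flip[of i] by (simp add: tag_weight_def)
      finally show ?thesis .
    qed
  qed
  then show ?thesis
    using g len unfolding tag maubach_coords_def by (simp add: length_maubach_child2)
qed

lemma maubach_child2_coords_tag1:
  fixes vs :: "(real^'n) list"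
  assumes coords: "maubach_coords vs 1 w D"
  shows "maubach_coords (fst (maubach_child2 vs 1)) (snd (maubach_child2 vs 1))
           (w + D 1) (\<lambda>j. (1/2) *\<^sub>R cycle_flip 1 D j)"
proof -
  have len: "length vs = CARD('n) + 1" using maubach_coords_length[OF coords] .
  have tag: "snd (maubach_child2 vs 1) = CARD('n)"
    using len unfolding maubach_child2_def maubach_tag_def by simp
  have vertex: "vs ! i = w + tag_weight 1 i *\<^sub>R (\<Sum>j=1..i. D j)" if "i \<le> CARD('n)" for i
    using maubach_coords_vertex[OF coords that] .
  have "vs ! 1 = w + D 1" using vertex[of 1] by (simp add: tag_weight_def)
  then have mid: "maubach_mid vs 1 = w + (1/2) *\<^sub>R D 1"
    by (simp only: maubach_mid_def maubach_coords_base[OF coords] midpoint_translate)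
  have "fst (maubach_child2 vs 1) ! i =
      (w + D 1) + tag_weight CARD('n) i *\<^sub>R (\<Sum>j=1..i. (1/2) *\<^sub>R cycle_flip 1 D j)"
    if i: "i \<le> CARD('n)" for i
  proof -
    have weight: "tag_weight CARD('n) i = 1" using i by (simp add: tag_weight_def)
    consider "i = 0" | "i = 1" | "1 < i" by linarith
    then show ?thesis
    proof cases
      case 1
      then show ?thesis using vertex[of 1] weight
        by (simp add: nth_maubach_child2 len tag_weight_def)
    next
      case 2
      have "fst (maubach_child2 vs 1) ! i = w + (1/2) *\<^sub>R D 1"
        using 2 mid by (simp add: nth_maubach_child2 len)
      also have "\<dots> = (w + D 1) + (1/2) *\<^sub>R (D 1 - 2 *\<^sub>R D 1)"
        by (rule half_rebase)
      also have "\<dots> = (w + D 1) + tag_weight CARD('n) i *\<^sub>R (\<Sum>j=1..i. (1/2) *\<^sub>R cycle_flip 1 D j)"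
        using 2 weight by (simp add: cycle_flip_def scaleR_2)
      finally show ?thesis .
    next
      case 3
      then show ?thesis using vertex[of i] i weight half_rebase sum_cycle_flip[of 1 D i]
        by (simp add: nth_maubach_child2 len tag_weight_def flip: scaleR_sum_right)
    qed
  qed
  then show ?thesis
    using len unfolding tag maubach_coords_def by (simp add: length_maubach_child2)
qed

definition signed_rescaling :: "nat \<Rightarrow> (nat \<Rightarrow> 'a::real_vector) \<Rightarrow> (nat \<Rightarrow> 'a) \<Rightarrow> bool" where
  "signed_rescaling n D0 D \<longleftrightarrow> (\<exists>t \<pi> s. 0 < t \<and> bij_betw \<pi> {1..n} {1..n} \<and>
     (\<forall>j. s j = 1 \<or> s j = -1) \<and> D = (\<lambda>j. (s j * t) *\<^sub>R D0 (\<pi> j)))"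

lemma signed_rescaling_refl: "signed_rescaling n D D"
  unfolding signed_rescaling_def
  by (rule exI[of _ 1], rule exI[of _ id], rule exI[of _ "\<lambda>_. 1"]) simp

lemma signed_rescaling_trans:
  assumes "signed_rescaling n D0 D" "signed_rescaling n D D'"
  shows "signed_rescaling n D0 D'"
proof -
  obtain t \<pi> s where t: "0 < t" and \<pi>: "bij_betw \<pi> {1..n} {1..n}"
    and s: "\<forall>j. s j = 1 \<or> s j = -1" and D: "D = (\<lambda>j. (s j * t) *\<^sub>R D0 (\<pi> j))"
    using assms(1) unfolding signed_rescaling_def by blast
  obtain t' \<pi>' s' where t': "0 < t'" and \<pi>': "bij_betw \<pi>' {1..n} {1..n}"
    and s': "\<forall>j. s' j = 1 \<or> s' j = -1" and D': "D' = (\<lambda>j. (s' j * t') *\<^sub>R D (\<pi>' j))"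
    using assms(2) unfolding signed_rescaling_def by blast
  have "D' = (\<lambda>j. ((s' j * s (\<pi>' j)) * (t' * t)) *\<^sub>R D0 ((\<pi> \<circ> \<pi>') j))"
    unfolding D' D by (simp add: mult_ac)
  moreover have "\<forall>j. s' j * s (\<pi>' j) = 1 \<or> s' j * s (\<pi>' j) = -1"
    using s s' by (metis mult_minus1 mult_1 minus_minus)
  ultimately show ?thesis
    using t t' bij_betw_trans[OF \<pi>' \<pi>] unfolding signed_rescaling_def
    by (intro exI[of _ "t' * t"] exI[of _ "\<pi> \<circ> \<pi>'"] exI[of _ "\<lambda>j. s' j * s (\<pi>' j)"]) simp
qed

lemma signed_rescaling_half: "signed_rescaling n D (\<lambda>j. (1/2) *\<^sub>R D j)"
  unfolding signed_rescaling_def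
  by (rule exI[of _ "1/2"], rule exI[of _ id], rule exI[of _ "\<lambda>_. 1"]) simp

definition cycle_perm :: "nat \<Rightarrow> nat \<Rightarrow> nat" where
  "cycle_perm g j = (if j < g then j + 1 else if j = g then 1 else j)"

lemma bij_betw_cycle_perm:
  assumes "1 \<le> g" "g \<le> n"
  shows "bij_betw (cycle_perm g) {1..n} {1..n}"
proof (rule bij_betw_byWitness[where f' = "\<lambda>j. if j = 1 then g else if j \<le> g then j - 1 else j"])
  show "\<forall>j\<in>{1..n}. (if cycle_perm g j = 1 then g
      else if cycle_perm g j \<le> g then cycle_perm g j - 1 else cycle_perm g j) = j"
    using assms unfolding cycle_perm_def by auto
  show "\<forall>j\<in>{1..n}. cycle_perm g (if j = 1 then g else if j \<le> g then j - 1 else j) = j"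
    using assms unfolding cycle_perm_def by auto
  show "cycle_perm g ` {1..n} \<subseteq> {1..n}"
    using assms unfolding cycle_perm_def by auto
  show "(\<lambda>j. if j = 1 then g else if j \<le> g then j - 1 else j) ` {1..n} \<subseteq> {1..n}"
    using assms by auto
qed

lemma signed_rescaling_cycle_flip:
  assumes "1 \<le> g" "g \<le> n"
  shows "signed_rescaling n D (cycle_flip g D)"
proof -
  have "cycle_flip g D = (\<lambda>j. ((if j = g then -1 else 1) * 1) *\<^sub>R D (cycle_perm g j))"
    by (auto simp: fun_eq_iff cycle_flip_def cycle_perm_def)
  moreover have "\<forall>j. (if j = g then -1 else 1) = (1::real) \<or> (if j = g then -1 else 1) = (-1::real)"
    by simp
  ultimately show ?thesis
    using bij_betw_cycle_perm[OF assms] unfolding signed_rescaling_def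
    by (intro exI[of _ "1::real"] exI[of _ "cycle_perm g"] exI[of _ "\<lambda>j. if j = g then -1 else 1::real"]) simp
qed

lemma maubach_child1_coords_rescaled:
  fixes vs :: "(real^'n) list"
  assumes coords: "maubach_coords vs g w D" and g: "1 \<le> g" "g \<le> CARD('n)"
  obtains D' where "maubach_coords (fst (maubach_child1 vs g)) (snd (maubach_child1 vs g)) w D'"
    and "signed_rescaling CARD('n) D D'"
proof (cases "g = 1")
  case True
  then show ?thesis
    using that maubach_child1_coords_tag1 coords signed_rescaling_half by blast
next
  case False
  then show ?thesis
    using that[OF maubach_child1_coords[OF coords _ g(2)] signed_rescaling_refl] g by simp
qed

lemma maubach_child2_coords_rescaled:
  fixes vs :: "(real^'n) list"
  assumes coords: "maubach_coords vs g w D" and g: "1 \<le> g" "g \<le> CARD('n)"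
  obtains w' D' where "maubach_coords (fst (maubach_child2 vs g)) (snd (maubach_child2 vs g)) w' D'"
    and "signed_rescaling CARD('n) D D'"
proof (cases "g = 1")
  case True
  then show ?thesis
    using that maubach_child2_coords_tag1 coords
      signed_rescaling_trans[OF signed_rescaling_cycle_flip[OF g] signed_rescaling_half] by blast
next
  case False
  then show ?thesis
    using that[OF maubach_child2_coords[OF coords _ g(2)] signed_rescaling_cycle_flip[OF g]] g
    by simp
qed

lemma maubach_descendant_coords:
  fixes vs0 :: "(real^'n) list"
  assumes coords0: "maubach_coords vs0 g0 w0 D0" and g0: "1 \<le> g0" "g0 \<le> CARD('n)"
    and "maubach_descendant (vs0, g0) T"
  shows "1 \<le> snd T \<and> snd T \<le> CARD('n) \<and>
    (\<exists>w D. maubach_coords (fst T) (snd T) w D \<and> signed_rescaling CARD('n) D0 D)"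
  using assms(4)
proof (induction T rule: maubach_descendant.induct)
  case self
  then show ?case using coords0 g0 signed_rescaling_refl by auto
next
  case (child1 vs g)
  then obtain w D where g: "1 \<le> g" "g \<le> CARD('n)" and coords: "maubach_coords vs g w D"
    and D: "signed_rescaling CARD('n) D0 D" by auto
  obtain D' where "maubach_coords (fst (maubach_child1 vs g)) (snd (maubach_child1 vs g)) w D'"
    and "signed_rescaling CARD('n) D D'"
    using maubach_child1_coords_rescaled[OF coords g] .
  moreover have "snd (maubach_child1 vs g) = maubach_tag vs g"
    unfolding maubach_child1_def by simp
  ultimately show ?case
    using maubach_tag_range[OF g maubach_coords_length[OF coords]] signed_rescaling_trans[OF D] by auto
next
  case (child2 vs g)
  then obtain w D where g: "1 \<le> g" "g \<le> CARD('n)" and coords: "maubach_coords vs g w D"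
    and D: "signed_rescaling CARD('n) D0 D" by auto
  obtain w' D' where "maubach_coords (fst (maubach_child2 vs g)) (snd (maubach_child2 vs g)) w' D'"
    and "signed_rescaling CARD('n) D D'"
    using maubach_child2_coords_rescaled[OF coords g] .
  moreover have "snd (maubach_child2 vs g) = maubach_tag vs g"
    unfolding maubach_child2_def by simp
  ultimately show ?case
    using maubach_tag_range[OF g maubach_coords_length[OF coords]] signed_rescaling_trans[OF D] by auto
qed

section \<open>Outer and inner diameters\<close>

lemma outer_diam_le_cball:
  fixes S :: "(real^'n) set"
  assumes "S \<noteq> {}" "S \<subseteq> cball C \<rho>"
  shows "outer_diam S \<le> 2 * \<rho>"
proof -
  have "bdd_below {r. \<exists>c. S \<subseteq> cball c r}"
  proof (rule bdd_belowI[of _ 0])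
    fix r assume "r \<in> {r. \<exists>c. S \<subseteq> cball c r}"
    then obtain c where "S \<subseteq> cball c r" by auto
    then show "0 \<le> r" using assms(1) by (metis cball_eq_empty not_le subset_empty)
  qed
  then have "Inf {r. \<exists>c. S \<subseteq> cball c r} \<le> \<rho>"
    using assms(2) by (intro cInf_lower) auto
  then show ?thesis unfolding outer_diam_def by simp
qed

lemma dist_le_outer_diam:
  fixes S :: "(real^'n) set"
  assumes "bounded S" "x \<in> S" "y \<in> S"
  shows "dist x y \<le> outer_diam S"
proof -
  have "dist x y / 2 \<le> Inf {r. \<exists>c. S \<subseteq> cball c r}"
  proof (rule cInf_greatest)
    show "{r. \<exists>c. S \<subseteq> cball c r} \<noteq> {}"
      using assms(1) bounded_subset_cball by blast
  next
    fix r assume "r \<in> {r. \<exists>c. S \<subseteq> cball c r}"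
    then obtain c where "S \<subseteq> cball c r" by auto
    then have "dist c x \<le> r" "dist c y \<le> r" using assms(2,3) by auto
    then show "dist x y / 2 \<le> r" using dist_triangle[of x y c] by (simp add: dist_commute)
  qed
  then show ?thesis unfolding outer_diam_def by simp
qed

lemma inner_diam_ge_cball:
  fixes S :: "(real^'n) set"
  assumes "bounded S" "cball C \<rho> \<subseteq> S" "0 \<le> \<rho>"
  shows "2 * \<rho> \<le> inner_diam S"
proof -
  obtain x e where S: "S \<subseteq> cball x e" using assms(1) bounded_subset_cball by blast
  have "bdd_above {r. \<exists>c. 0 \<le> r \<and> cball c r \<subseteq> S}"
  proof (rule bdd_aboveI[of _ e])
    fix r assume "r \<in> {r. \<exists>c. 0 \<le> r \<and> cball c r \<subseteq> S}"
    then obtain c where "0 \<le> r" "cball c r \<subseteq> cball x e" using S by auto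
    then have "dist c x + r \<le> e" by (simp add: cball_subset_cball_iff)
    then show "r \<le> e" using zero_le_dist[of c x] by linarith
  qed
  then have "\<rho> \<le> Sup {r. \<exists>c. 0 \<le> r \<and> cball c r \<subseteq> S}"
    using assms(2,3) by (intro cSup_upper) auto
  then show ?thesis unfolding inner_diam_def by simp
qed

lemma inner_diam_le_slab:
  fixes S :: "(real^'n) set"
  assumes "S \<noteq> {}" "p \<noteq> 0" "\<And>y. y \<in> S \<Longrightarrow> a \<le> p \<bullet> y \<and> p \<bullet> y \<le> b"
  shows "inner_diam S \<le> (b - a) / norm p"
proof -
  have "Sup {r. \<exists>c. 0 \<le> r \<and> cball c r \<subseteq> S} \<le> (b - a) / norm p / 2"
  proof (rule cSup_least)
    obtain x where "x \<in> S" using assms(1) by auto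
    then have "cball x 0 \<subseteq> S" by simp
    then show "{r. \<exists>c. 0 \<le> r \<and> cball c r \<subseteq> S} \<noteq> {}" by blast
  next
    fix r assume "r \<in> {r. \<exists>c. 0 \<le> r \<and> cball c r \<subseteq> S}"
    then obtain c where r: "0 \<le> r" and ball: "cball c r \<subseteq> S" by auto
    define e where "e = (1 / norm p) *\<^sub>R p"
    have "norm e = 1" "p \<bullet> e = norm p"
      using assms(2) by (simp_all add: e_def dot_square_norm power2_eq_square)
    moreover have "c + r *\<^sub>R e \<in> S" "c - r *\<^sub>R e \<in> S"
      using ball r \<open>norm e = 1\<close> by (auto simp: dist_norm subset_iff)
    ultimately have "p \<bullet> (c + r *\<^sub>R e) \<le> b" "a \<le> p \<bullet> (c - r *\<^sub>R e)" "p \<bullet> e = norm p"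
      using assms(3) by auto
    then have "p \<bullet> c + r * norm p \<le> b" "a \<le> p \<bullet> c - r * norm p"
      by (simp_all add: inner_add_right inner_diff_right)
    then have "2 * r * norm p \<le> b - a" by simp
    then show "r \<le> (b - a) / norm p / 2"
      using assms(2) by (simp add: field_simps)
  qed
  then show ?thesis unfolding inner_diam_def by simp
qed

lemma diam_convex_hull_nonneg:
  fixes vs :: "(real^'n) list"
  assumes "vs \<noteq> []"
  shows "0 \<le> outer_diam (convex hull (set vs))" "0 \<le> inner_diam (convex hull (set vs))"
proof -
  have "hd vs \<in> convex hull (set vs)" using assms by (intro hull_inc) simp
  moreover have "bounded (convex hull (set vs))" by (simp add: bounded_convex_hull finite_imp_bounded)
  ultimately show "0 \<le> outer_diam (convex hull (set vs))" "0 \<le> inner_diam (convex hull (set vs))"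
    using dist_le_outer_diam[of _ "hd vs" "hd vs"] inner_diam_ge_cball[of _ "hd vs" 0] by auto
qed

lemma shape_ratio_nonneg:
  fixes vs :: "(real^'n) list"
  assumes "vs \<noteq> []"
  shows "0 \<le> shape_ratio vs"
  unfolding shape_ratio_def using diam_convex_hull_nonneg[OF assms] by simp

lemma maubach_coords_vertex_in_hull:
  "maubach_coords vs g w D \<Longrightarrow> i \<le> CARD('n) \<Longrightarrow> vs ! i \<in> convex hull (set vs)"
  for vs :: "(real^'n) list"
  by (intro hull_inc nth_mem) (simp add: maubach_coords_length)

lemma outer_diam_le_coords:
  fixes vs :: "(real^'n) list"
  assumes coords: "maubach_coords vs g w D"
  shows "outer_diam (convex hull (set vs)) \<le> (\<Sum>j=1..CARD('n). tag_weight g j * norm (D j))"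
proof -
  define C where "C = w + (\<Sum>j=1..CARD('n). (tag_weight g j / 2) *\<^sub>R D j)"
  define \<rho> where "\<rho> = (\<Sum>j=1..CARD('n). tag_weight g j / 2 * norm (D j))"
  have "set vs \<subseteq> cball C \<rho>"
  proof
    fix x assume "x \<in> set vs"
    then obtain i where i: "i \<le> CARD('n)" and x: "x = vs ! i"
      using maubach_coords_set[OF coords] by blast
    define a where "a j = tag_weight g j / 2 - (if j \<le> i then tag_weight g i else 0)" for j
    have "(\<Sum>j=1..CARD('n). (if j \<le> i then tag_weight g i else 0) *\<^sub>R D j) =
        (\<Sum>j=1..i. tag_weight g i *\<^sub>R D j)"
      using i by (intro sum.mono_neutral_cong_right) auto
    then have "x = w + (\<Sum>j=1..CARD('n). (if j \<le> i then tag_weight g i else 0) *\<^sub>R D j)"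
      using maubach_coords_vertex[OF coords i] unfolding x by (simp add: scaleR_sum_right)
    then have "C - x = (\<Sum>j=1..CARD('n). a j *\<^sub>R D j)"
      unfolding C_def a_def by (simp add: sum_subtractf scaleR_diff_left)
    also have "norm \<dots> \<le> (\<Sum>j=1..CARD('n). \<bar>a j\<bar> * norm (D j))"
      using norm_sum[of "\<lambda>j. a j *\<^sub>R D j"] by simp
    also have "\<dots> \<le> \<rho>"
      unfolding \<rho>_def a_def
      by (intro sum_mono mult_right_mono) (auto simp: tag_weight_def)
    finally show "x \<in> cball C \<rho>" by (simp add: dist_norm)
  qed
  then have "convex hull (set vs) \<subseteq> cball C \<rho>" by (simp add: convex_cball hull_minimal)
  then have "outer_diam (convex hull (set vs)) \<le> 2 * \<rho>"
    using maubach_coords_length[OF coords] by (intro outer_diam_le_cball) auto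
  also have "\<dots> = (\<Sum>j=1..CARD('n). tag_weight g j * norm (D j))"
    unfolding \<rho>_def by (simp add: sum_distrib_left)
  finally show ?thesis .
qed

lemma edge_le_outer_diam:
  fixes vs :: "(real^'n) list"
  assumes coords: "maubach_coords vs g w D" and l: "1 \<le> l" "l \<le> CARD('n)"
  shows "tag_weight g l * norm (D l) \<le> outer_diam (convex hull (set vs))"
proof -
  obtain k where k: "l = Suc k" using l by (cases l) auto
  define \<theta> where "\<theta> = tag_weight g l / tag_weight g k"
  have \<theta>: "0 \<le> \<theta>" "\<theta> \<le> 1"
    unfolding \<theta>_def using tag_weight_pos[of g k] tag_weight_pos[of g l] tag_weight_antimono[of k l g] k
    by auto
  \<comment> \<open>the point of the segment from \<open>v\<^sub>0\<close> to \<open>v\<^sub>k\<close> that differs from \<open>v\<^sub>l\<close> by the weighted edge\<close>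
  define q where "q = (1 - \<theta>) *\<^sub>R vs ! 0 + \<theta> *\<^sub>R vs ! k"
  have q: "q \<in> convex hull (set vs)"
    unfolding q_def using \<theta> k l maubach_coords_vertex_in_hull[OF coords]
    by (intro convexD) auto
  have "vs ! k = w + tag_weight g k *\<^sub>R (\<Sum>j=1..k. D j)"
    using maubach_coords_vertex[OF coords, of k] k l by simp
  then have "q = w + (\<theta> * tag_weight g k) *\<^sub>R (\<Sum>j=1..k. D j)"
    unfolding q_def maubach_coords_base[OF coords] by (simp add: algebra_simps)
  also have "\<theta> * tag_weight g k = tag_weight g l"
    unfolding \<theta>_def using tag_weight_pos[of g k] by simp
  finally have "vs ! l - q = tag_weight g l *\<^sub>R D l"
    using maubach_coords_vertex[OF coords l(2)] k by (simp add: algebra_simps)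
  then have "dist (vs ! l) q = tag_weight g l * norm (D l)"
    using tag_weight_pos[of g l] by (simp add: dist_norm)
  then show ?thesis
    using dist_le_outer_diam[OF _ maubach_coords_vertex_in_hull[OF coords l(2)] q]
    by (simp add: bounded_convex_hull finite_imp_bounded)
qed

section \<open>Dual frames and inscribed balls\<close>

definition dual_frame :: "(nat \<Rightarrow> real^'n) \<Rightarrow> (nat \<Rightarrow> real^'n) \<Rightarrow> bool" where
  "dual_frame \<Phi> D \<longleftrightarrow>
     (\<forall>i\<in>{1..CARD('n)}. \<forall>j\<in>{1..CARD('n)}. \<Phi> i \<bullet> D j = (if i = j then 1 else 0)) \<and>
     (\<forall>x. (\<Sum>j=1..CARD('n). (\<Phi> j \<bullet> x) *\<^sub>R D j) = x)"

lemma dual_frame_inner: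
  "dual_frame \<Phi> D \<Longrightarrow> i \<in> {1..CARD('n)} \<Longrightarrow> j \<in> {1..CARD('n)} \<Longrightarrow>
    \<Phi> i \<bullet> D j = (if i = j then 1 else 0)"
  for \<Phi> D :: "nat \<Rightarrow> real^'n"
  unfolding dual_frame_def by blast

lemma dual_frame_expansion: "dual_frame \<Phi> D \<Longrightarrow> (\<Sum>j=1..CARD('n). (\<Phi> j \<bullet> x) *\<^sub>R D j) = x"
  for \<Phi> D :: "nat \<Rightarrow> real^'n"
  unfolding dual_frame_def by blast

lemma dual_frame_nonzero: "dual_frame \<Phi> D \<Longrightarrow> l \<in> {1..CARD('n)} \<Longrightarrow> \<Phi> l \<noteq> 0"
  for \<Phi> D :: "nat \<Rightarrow> real^'n"
  using dual_frame_inner[of \<Phi> D l l] by auto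

lemma inner_diam_le_dual:
  fixes vs :: "(real^'n) list"
  assumes coords: "maubach_coords vs g w D" and dual: "dual_frame \<Phi> D"
    and l: "l \<in> {1..CARD('n)}"
  shows "inner_diam (convex hull (set vs)) \<le> tag_weight g l / norm (\<Phi> l)"
proof -
  let ?K = "{y. \<Phi> l \<bullet> w \<le> \<Phi> l \<bullet> y \<and> \<Phi> l \<bullet> y \<le> \<Phi> l \<bullet> w + tag_weight g l}"
  have "set vs \<subseteq> ?K"
  proof
    fix x assume "x \<in> set vs"
    then obtain i where i: "i \<le> CARD('n)" and x: "x = vs ! i"
      using maubach_coords_set[OF coords] by blast
    have "\<Phi> l \<bullet> (\<Sum>j=1..i. D j) = (\<Sum>j=1..i. if l = j then 1 else 0)"
      unfolding inner_sum_right using dual_frame_inner[OF dual l] i by (intro sum.cong) auto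
    also have "\<dots> = (if l \<le> i then 1 else 0)" using l by simp
    finally have "\<Phi> l \<bullet> x = \<Phi> l \<bullet> w + (if l \<le> i then tag_weight g i else 0)"
      unfolding x maubach_coords_vertex[OF coords i] by (simp add: inner_add_right)
    then show "x \<in> ?K"
      using tag_weight_pos[of g i] tag_weight_pos[of g l] tag_weight_antimono[of l i g] by auto
  qed
  moreover have "convex ?K"
    by (simp add: convex_Int convex_halfspace_ge convex_halfspace_le Collect_conj_eq)
  ultimately have "convex hull (set vs) \<subseteq> ?K" by (rule hull_minimal)
  then show ?thesis
    using inner_diam_le_slab[of "convex hull (set vs)" "\<Phi> l"] dual_frame_nonzero[OF dual l]
      maubach_coords_length[OF coords] by fastforce
qed

definition dual_vec :: "(nat \<Rightarrow> real^'n) \<Rightarrow> nat \<Rightarrow> real^'n" where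
  "dual_vec \<Phi> k = (if k \<le> CARD('n) then \<Phi> k else 0)"

text \<open>The barycentric coordinates of \<open>x\<close> with respect to a simplex with Maubach coordinates
  \<open>(w, D)\<close>, expressed through the coordinates \<open>\<Phi>\<^sub>k \<bullet> (x - w)\<close> of \<open>x - w\<close> in the frame \<open>D\<close>;
  \<open>dual_vec\<close> extends \<open>\<Phi>\<close> by zero so that the index \<open>n + 1\<close> needs no special case.\<close>

definition maubach_bary :: "nat \<Rightarrow> (nat \<Rightarrow> real^'n) \<Rightarrow> real^'n \<Rightarrow> real^'n \<Rightarrow> nat \<Rightarrow> real" where
  "maubach_bary g \<Phi> w x i =
     (if i = 0 then 1 - dual_vec \<Phi> 1 \<bullet> (x - w) - dual_vec \<Phi> (g + 1) \<bullet> (x - w)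
      else (dual_vec \<Phi> i \<bullet> (x - w) - dual_vec \<Phi> (i + 1) \<bullet> (x - w)) / tag_weight g i)"

definition bary_lipschitz :: "nat \<Rightarrow> (nat \<Rightarrow> real^'n) \<Rightarrow> nat \<Rightarrow> real" where
  "bary_lipschitz g \<Phi> i =
     (if i = 0 then norm (dual_vec \<Phi> 1) + norm (dual_vec \<Phi> (g + 1))
      else (norm (dual_vec \<Phi> i) + norm (dual_vec \<Phi> (i + 1))) / tag_weight g i)"

lemma sum_diff_div_tag_weight:
  fixes y :: "nat \<Rightarrow> real"
  shows "(\<Sum>i=1..m. (y i - y (i + 1)) / tag_weight g i) =
    (if m \<le> g then y 1 - y (m + 1) else y 1 + y (g + 1) - 2 * y (m + 1))"
proof (induction m)
  case (Suc m)
  then show ?case by (cases "Suc m \<le> g"; cases "m = g") (auto simp: tag_weight_def)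
qed simp

lemma summation_by_parts:
  fixes f :: "nat \<Rightarrow> real" and D :: "nat \<Rightarrow> 'a::real_vector"
  shows "(\<Sum>i=1..m. (f i - f (i + 1)) *\<^sub>R (\<Sum>j=1..i. D j)) = (\<Sum>j=1..m. (f j - f (m + 1)) *\<^sub>R D j)"
proof (induction m)
  case (Suc m)
  have "(\<Sum>j=1..m. (f j - f (m + 1)) *\<^sub>R D j) + (f (Suc m) - f (Suc m + 1)) *\<^sub>R (\<Sum>j=1..m. D j) =
      (\<Sum>j=1..m. (f j - f (Suc m + 1)) *\<^sub>R D j)"
    by (simp add: scaleR_sum_right flip: sum.distrib scaleR_add_left)
  then show ?case using Suc by (simp add: algebra_simps)
qed simp

lemma sum_maubach_bary:
  fixes \<Phi> :: "nat \<Rightarrow> real^'n"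
  assumes "g \<le> CARD('n)"
  shows "(\<Sum>i=0..CARD('n). maubach_bary g \<Phi> w x i) = 1"
proof -
  let ?y = "\<lambda>k. dual_vec \<Phi> k \<bullet> (x - w)"
  have "(\<Sum>i=1..CARD('n). maubach_bary g \<Phi> w x i) = (\<Sum>i=1..CARD('n). (?y i - ?y (i + 1)) / tag_weight g i)"
    unfolding maubach_bary_def by (intro sum.cong) auto
  also have "\<dots> = ?y 1 + ?y (g + 1)"
    using assms sum_diff_div_tag_weight[of ?y g "CARD('n)"] by (auto simp: dual_vec_def)
  finally show ?thesis
    by (simp add: sum.atLeast_Suc_atMost maubach_bary_def)
qed

lemma maubach_bary_combination:
  fixes vs :: "(real^'n) list"
  assumes coords: "maubach_coords vs g w D" and dual: "dual_frame \<Phi> D" and g: "g \<le> CARD('n)"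
  shows "(\<Sum>i=0..CARD('n). maubach_bary g \<Phi> w x i *\<^sub>R vs ! i) = x"
proof -
  let ?b = "maubach_bary g \<Phi> w x" and ?y = "\<lambda>k. dual_vec \<Phi> k \<bullet> (x - w)"
  let ?P = "\<lambda>i. \<Sum>j=1..i. D j"
  have "(\<Sum>i=0..CARD('n). ?b i *\<^sub>R vs ! i) =
      (\<Sum>i=0..CARD('n). ?b i *\<^sub>R w + (?b i * tag_weight g i) *\<^sub>R ?P i)"
    using maubach_coords_vertex[OF coords] by (intro sum.cong) (auto simp: scaleR_add_right)
  also have "\<dots> = w + (\<Sum>i=0..CARD('n). (?b i * tag_weight g i) *\<^sub>R ?P i)"
    using sum_maubach_bary[OF g, of \<Phi> w x] by (simp add: sum.distrib flip: scaleR_sum_left)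
  also have "(\<Sum>i=0..CARD('n). (?b i * tag_weight g i) *\<^sub>R ?P i) =
      (\<Sum>i=1..CARD('n). (?b i * tag_weight g i) *\<^sub>R ?P i)"
    by (subst sum.atLeast_Suc_atMost) simp_all
  also have "\<dots> = (\<Sum>i=1..CARD('n). (?y i - ?y (i + 1)) *\<^sub>R ?P i)"
    by (intro sum.cong) (simp_all add: maubach_bary_def tag_weight_def)
  also have "\<dots> = (\<Sum>j=1..CARD('n). (?y j - ?y (CARD('n) + 1)) *\<^sub>R D j)"
    by (rule summation_by_parts)
  also have "\<dots> = (\<Sum>j=1..CARD('n). (\<Phi> j \<bullet> (x - w)) *\<^sub>R D j)"
    by (intro sum.cong) (simp_all add: dual_vec_def)
  also have "\<dots> = x - w"
    by (rule dual_frame_expansion[OF dual])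
  finally show ?thesis by simp
qed

lemma maubach_bary_lipschitz:
  fixes \<Phi> :: "nat \<Rightarrow> real^'n"
  shows "maubach_bary g \<Phi> w x i - bary_lipschitz g \<Phi> i * norm z \<le> maubach_bary g \<Phi> w (x + z) i"
proof -
  have cs: "\<bar>dual_vec \<Phi> k \<bullet> z\<bar> \<le> norm (dual_vec \<Phi> k) * norm z" for k
    by (rule Cauchy_Schwarz_ineq2)
  have shift: "dual_vec \<Phi> k \<bullet> (x + z - w) = dual_vec \<Phi> k \<bullet> (x - w) + dual_vec \<Phi> k \<bullet> z" for k
    by (simp add: inner_diff_right inner_add_right)
  show ?thesis
  proof (cases "i = 0")
    case True
    then show ?thesis
      using cs[of 1] cs[of "g + 1"] by (simp add: maubach_bary_def bary_lipschitz_def shift algebra_simps)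
  next
    case False
    let ?K = "(norm (dual_vec \<Phi> i) + norm (dual_vec \<Phi> (i + 1))) * norm z"
    let ?\<delta> = "dual_vec \<Phi> i \<bullet> z - dual_vec \<Phi> (i + 1) \<bullet> z"
    have "maubach_bary g \<Phi> w (x + z) i = maubach_bary g \<Phi> w x i + ?\<delta> / tag_weight g i"
      using False by (simp add: maubach_bary_def shift add_divide_distrib[symmetric])
    moreover have "bary_lipschitz g \<Phi> i * norm z = ?K / tag_weight g i"
      using False by (simp add: bary_lipschitz_def)
    moreover have "- ?K \<le> ?\<delta>"
      using cs[of i] cs[of "i + 1"] by (simp add: algebra_simps abs_le_iff)
    then have "- ?K / tag_weight g i \<le> ?\<delta> / tag_weight g i"
      using tag_weight_pos[of g i] by (intro divide_right_mono) auto
    ultimately show ?thesis by simp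
  qed
qed

lemma maubach_bary_surj:
  fixes \<Phi> D :: "nat \<Rightarrow> real^'n"
  assumes dual: "dual_frame \<Phi> D" and g: "g \<le> CARD('n)" and \<mu>: "(\<Sum>i=0..CARD('n). \<mu> i) = 1"
  obtains C where "\<And>i. i \<le> CARD('n) \<Longrightarrow> maubach_bary g \<Phi> w C i = \<mu> i"
proof -
  define \<eta> where "\<eta> k = (\<Sum>i=k..CARD('n). tag_weight g i * \<mu> i)" for k
  define C where "C = w + (\<Sum>j=1..CARD('n). \<eta> j *\<^sub>R D j)"
  have coord: "dual_vec \<Phi> k \<bullet> (C - w) = \<eta> k" if "1 \<le> k" for k
  proof (cases "k \<le> CARD('n)")
    case True
    have "dual_vec \<Phi> k \<bullet> (C - w) = (\<Sum>j=1..CARD('n). \<eta> j * (\<Phi> k \<bullet> D j))"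
      using True by (simp add: C_def dual_vec_def inner_sum_right)
    also have "\<dots> = (\<Sum>j=1..CARD('n). if j = k then \<eta> j else 0)"
      using dual_frame_inner[OF dual, of k] True that by (intro sum.cong) auto
    finally show ?thesis using True that by simp
  qed (simp add: dual_vec_def \<eta>_def)
  have pos: "maubach_bary g \<Phi> w C i = \<mu> i" if "1 \<le> i" "i \<le> CARD('n)" for i
  proof -
    have "\<eta> i = tag_weight g i * \<mu> i + \<eta> (i + 1)"
      unfolding \<eta>_def using that by (simp add: sum.atLeast_Suc_atMost)
    then show ?thesis
      using that coord[of i] coord[of "i + 1"] tag_weight_pos[of g i] by (simp add: maubach_bary_def)
  qed
  have "maubach_bary g \<Phi> w C 0 = \<mu> 0"
    using sum_maubach_bary[OF g, of \<Phi> w C] \<mu> pos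
    by (simp add: sum.atLeast_Suc_atMost del: sum.cl_ivl_Suc)
  then show thesis using that pos by (metis le_0_eq not_less_eq_eq One_nat_def)
qed

lemma cball_subset_convex_hull:
  fixes p :: "'i \<Rightarrow> 'a::real_normed_vector" and b :: "'a \<Rightarrow> 'i \<Rightarrow> real"
  assumes "finite I"
    and "\<And>x. (\<Sum>i\<in>I. b x i) = 1" "\<And>x. (\<Sum>i\<in>I. b x i *\<^sub>R p i) = x"
    and "\<And>z i. i \<in> I \<Longrightarrow> b C i - L i * norm z \<le> b (C + z) i"
    and "\<And>i. i \<in> I \<Longrightarrow> 0 \<le> L i \<and> L i * \<rho> \<le> b C i"
  shows "cball C \<rho> \<subseteq> convex hull (p ` I)"
proof
  fix x assume "x \<in> cball C \<rho>"
  then have x: "norm (x - C) \<le> \<rho>" by (simp add: dist_norm norm_minus_commute)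
  have "0 \<le> b x i" if "i \<in> I" for i
  proof -
    have "L i * norm (x - C) \<le> L i * \<rho>" using x assms(5)[OF that] by (simp add: mult_left_mono)
    then show ?thesis using assms(4)[OF that, of "x - C"] assms(5)[OF that] by simp
  qed
  then have "(\<Sum>i\<in>I. b x i *\<^sub>R p i) \<in> convex hull (p ` I)"
    using assms(1,2) by (intro convex_sum) (auto intro: hull_inc)
  then show "x \<in> convex hull (p ` I)" using assms(3) by simp
qed

lemma bary_lipschitz_nonneg: "0 \<le> bary_lipschitz g \<Phi> i"
  unfolding bary_lipschitz_def using tag_weight_pos[of g i] by simp

lemma sum_bary_lipschitz_pos:
  fixes \<Phi> D :: "nat \<Rightarrow> real^'n"
  assumes "dual_frame \<Phi> D"
  shows "0 < (\<Sum>i=0..CARD('n). bary_lipschitz g \<Phi> i)"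
proof -
  have "0 < bary_lipschitz g \<Phi> 0"
    using dual_frame_nonzero[OF assms, of 1] by (simp add: bary_lipschitz_def dual_vec_def add_pos_nonneg)
  also have "\<dots> \<le> (\<Sum>i=0..CARD('n). bary_lipschitz g \<Phi> i)"
    by (intro member_le_sum) (auto simp: bary_lipschitz_nonneg)
  finally show ?thesis .
qed

lemma inner_diam_ge_coords:
  fixes vs :: "(real^'n) list"
  assumes coords: "maubach_coords vs g w D" and dual: "dual_frame \<Phi> D" and g: "g \<le> CARD('n)"
  shows "2 / (\<Sum>i=0..CARD('n). bary_lipschitz g \<Phi> i) \<le> inner_diam (convex hull (set vs))"
proof -
  define N where "N = (\<Sum>i=0..CARD('n). bary_lipschitz g \<Phi> i)"
  have N: "0 < N" unfolding N_def by (rule sum_bary_lipschitz_pos[OF dual])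
  have "(\<Sum>i=0..CARD('n). bary_lipschitz g \<Phi> i / N) = 1"
    using N by (simp add: N_def flip: sum_divide_distrib)
  then obtain C where C: "\<And>i. i \<le> CARD('n) \<Longrightarrow> maubach_bary g \<Phi> w C i = bary_lipschitz g \<Phi> i / N"
    using maubach_bary_surj[OF dual g] by blast
  have "cball C (1 / N) \<subseteq> convex hull ((\<lambda>i. vs ! i) ` {0..CARD('n)})"
  proof (rule cball_subset_convex_hull)
    show "(\<Sum>i\<in>{0..CARD('n)}. maubach_bary g \<Phi> w x i) = 1" for x
      by (rule sum_maubach_bary[OF g])
    show "(\<Sum>i\<in>{0..CARD('n)}. maubach_bary g \<Phi> w x i *\<^sub>R vs ! i) = x" for x
      by (rule maubach_bary_combination[OF coords dual g])
    show "maubach_bary g \<Phi> w C i - bary_lipschitz g \<Phi> i * norm z \<le> maubach_bary g \<Phi> w (C + z) i"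
      for z i by (rule maubach_bary_lipschitz)
    show "0 \<le> bary_lipschitz g \<Phi> i \<and> bary_lipschitz g \<Phi> i * (1 / N) \<le> maubach_bary g \<Phi> w C i"
      if "i \<in> {0..CARD('n)}" for i
      using C that bary_lipschitz_nonneg by simp
  qed simp
  also have "(\<lambda>i. vs ! i) ` {0..CARD('n)} = set vs"
    using set_conv_nth_atLeastAtMost[OF maubach_coords_length[OF coords]] by simp
  finally have "2 * (1 / N) \<le> inner_diam (convex hull (set vs))"
    using N by (intro inner_diam_ge_cball) (simp_all add: bounded_convex_hull finite_imp_bounded)
  then show ?thesis by (simp add: N_def)
qed

lemma inner_diam_pos_coords:
  fixes vs :: "(real^'n) list"
  assumes "maubach_coords vs g w D" "dual_frame \<Phi> D" "g \<le> CARD('n)"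
  shows "0 < inner_diam (convex hull (set vs))"
  using inner_diam_ge_coords[OF assms] sum_bary_lipschitz_pos[OF assms(2), of g]
  by (smt (verit) divide_pos_pos)

lemma sum_bary_lipschitz_le:
  fixes \<Phi> :: "nat \<Rightarrow> real^'n"
  assumes g: "1 \<le> g" "g \<le> CARD('n)"
  shows "(\<Sum>i=0..CARD('n). bary_lipschitz g \<Phi> i) \<le>
    5/2 * (\<Sum>j=1..CARD('n). norm (\<Phi> j) / tag_weight g j)"
proof -
  define M where "M k = norm (dual_vec \<Phi> k) / tag_weight g k" for k
  define S where "S = (\<Sum>j=1..CARD('n). M j)"
  have M_nonneg: "0 \<le> M k" for k unfolding M_def using tag_weight_pos[of g k] by simp
  have "bary_lipschitz g \<Phi> i \<le> M i + M (i + 1)" if "1 \<le> i" for i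
  proof -
    have "norm (dual_vec \<Phi> (i + 1)) / tag_weight g i \<le> M (i + 1)"
      unfolding M_def using tag_weight_antimono[of i "i + 1" g] tag_weight_pos[of g "i + 1"]
      by (intro divide_left_mono) auto
    then show ?thesis using that by (simp add: bary_lipschitz_def M_def add_divide_distrib)
  qed
  then have "(\<Sum>i=1..CARD('n). bary_lipschitz g \<Phi> i) \<le> (\<Sum>i=1..CARD('n). M i + M (i + 1))"
    by (intro sum_mono) auto
  also have "\<dots> = S + (S - M 1)"
  proof -
    have "(\<Sum>i=1..CARD('n). M (Suc i)) + M 1 = (\<Sum>i=1..Suc CARD('n). M i)"
      by (simp add: sum.shift_bounds_cl_Suc_ivl sum.atLeast_Suc_atMost del: sum.cl_ivl_Suc)
    also have "\<dots> = S" by (simp add: S_def M_def dual_vec_def)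
    finally show ?thesis by (simp add: S_def sum.distrib)
  qed
  finally have "(\<Sum>i=0..CARD('n). bary_lipschitz g \<Phi> i) \<le> M 1 + (1/2) * M (g + 1) + 2 * S - M 1"
    using g by (simp add: sum.atLeast_Suc_atMost bary_lipschitz_def M_def tag_weight_def
        del: sum.cl_ivl_Suc)
  also have "M (g + 1) \<le> S"
  proof (cases "g + 1 \<le> CARD('n)")
    case True
    then show ?thesis unfolding S_def using M_nonneg by (intro member_le_sum) auto
  next
    case False
    then have "M (g + 1) = 0" by (simp add: M_def dual_vec_def)
    then show ?thesis unfolding S_def using M_nonneg by (simp add: sum_nonneg)
  qed
  finally have "(\<Sum>i=0..CARD('n). bary_lipschitz g \<Phi> i) \<le> 5/2 * S" by simp
  also have "S = (\<Sum>j=1..CARD('n). norm (\<Phi> j) / tag_weight g j)"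
    unfolding S_def M_def dual_vec_def by (intro sum.cong) auto
  finally show ?thesis .
qed

section \<open>The initial simplex\<close>

lemma biorthogonal_system_exists:
  fixes D :: "'i \<Rightarrow> 'a::euclidean_space"
  assumes indep: "independent (D ` I)" and inj: "inj_on D I"
  obtains \<Phi> where "\<And>l j. j \<in> I \<Longrightarrow> \<Phi> l \<bullet> D j = (if l = j then 1 else 0)"
proof -
  have functionals: "\<forall>l. \<exists>h. linear h \<and> (\<forall>j\<in>I. h (D j) = (if l = j then 1 else 0 :: real))"
  proof
    fix l
    obtain h :: "'a \<Rightarrow> real" where h: "linear h"
      "\<forall>x\<in>D ` I. h x = (if l = inv_into I D x then 1 else 0)"
      using linear_independent_extend[OF indep, of "\<lambda>x. if l = inv_into I D x then 1 else 0"]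
      by auto
    moreover have "\<forall>j\<in>I. h (D j) = (if l = j then 1 else 0)"
      using h(2) inv_into_f_f[OF inj] by simp
    ultimately show "\<exists>h. linear h \<and> (\<forall>j\<in>I. h (D j) = (if l = j then 1 else 0 :: real))"
      by blast
  qed
  then obtain h :: "'i \<Rightarrow> 'a \<Rightarrow> real"
    where h: "\<forall>l. linear (h l) \<and> (\<forall>j\<in>I. h l (D j) = (if l = j then 1 else 0))"
    using choice[OF functionals] by (elim exE) (rule that)
  \<comment> \<open>the vector representing the functional \<open>h l\<close>\<close>
  have "(adjoint (h l) 1) \<bullet> D j = (if l = j then 1 else 0)" if "j \<in> I" for l j
    using adjoint_works[of "h l" "D j" 1] h that by (simp add: inner_commute)
  then show thesis by (rule that)
qed

lemma dual_frame_exists: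
  fixes D :: "nat \<Rightarrow> real^'n"
  assumes span: "span (D ` {1..CARD('n)}) = UNIV"
  obtains \<Phi> where "dual_frame \<Phi> D"
proof -
  let ?I = "{1..CARD('n)}"
  have "dim (UNIV :: (real^'n) set) \<le> card (D ` ?I)"
    using span by (intro span_card_ge_dim) auto
  then have card: "card (D ` ?I) = card ?I"
    using card_image_le[of ?I D] by simp
  then have "independent (D ` ?I)"
    using span by (intro card_le_dim_spanning[of _ UNIV]) auto
  moreover have "inj_on D ?I" using card by (simp add: inj_on_iff_eq_card)
  ultimately obtain \<Phi> where biorth: "\<And>l j. j \<in> ?I \<Longrightarrow> \<Phi> l \<bullet> D j = (if l = j then 1 else 0)"
    by (rule biorthogonal_system_exists) blast
  have "linear (\<lambda>x. \<Sum>j\<in>?I. (\<Phi> j \<bullet> x) *\<^sub>R D j)"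
    by (intro linear_compose_sum ballI bounded_linear.linear
        bounded_linear_compose[OF bounded_linear_scaleR_left] bounded_linear_inner_right)
  moreover have "(\<Sum>j\<in>?I. (\<Phi> j \<bullet> y) *\<^sub>R D j) = id y" if "y \<in> D ` ?I" for y
  proof -
    from that obtain i where i: "i \<in> ?I" "y = D i" by (rule imageE)
    have "(\<Sum>j\<in>?I. (\<Phi> j \<bullet> D i) *\<^sub>R D j) = (\<Sum>j\<in>?I. if j = i then D j else 0)"
      using biorth[OF i(1)] by (intro sum.cong) auto
    then show ?thesis using i by simp
  qed
  ultimately have "(\<Sum>j\<in>?I. (\<Phi> j \<bullet> x) *\<^sub>R D j) = id x" for x
    using linear_eq_on_span[OF _ linear_id, of _ "D ` ?I" x] span by blast
  then have "dual_frame \<Phi> D" unfolding dual_frame_def using biorth by simp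
  then show thesis by (rule that)
qed

lemma maubach_coords_of_vertices:
  fixes vs :: "(real^'n) list"
  assumes "length vs = CARD('n) + 1"
  shows "maubach_coords vs g (vs ! 0)
    (\<lambda>j. (1 / tag_weight g j) *\<^sub>R (vs ! j - vs ! 0) - (1 / tag_weight g (j - 1)) *\<^sub>R (vs ! (j - 1) - vs ! 0))"
proof -
  define f where "f j = (1 / tag_weight g j) *\<^sub>R (vs ! j - vs ! 0)" for j
  have "(\<Sum>j=1..i. f j - f (j - 1)) = f i" for i
    using sum_telescope''[of 0 i f] by (simp add: f_def)
  then show ?thesis
    using assms unfolding maubach_coords_def by (simp add: f_def)
qed

lemma tagged_simplex_span_edges:
  fixes vs :: "(real^'n) list"
  assumes simplex: "tagged_simplex vs g0" and coords: "maubach_coords vs g w D"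
  shows "span (D ` {1..CARD('n)}) = UNIV"
proof -
  let ?I = "{1..CARD('n)}"
  have len: "length vs = CARD('n) + 1" and dist: "distinct vs"
    and indep: "\<not> affine_dependent (set vs)"
    using simplex unfolding tagged_simplex_def by auto
  have w: "w = vs ! 0" using maubach_coords_base[OF coords] by simp
  have "{0..CARD('n)} = insert 0 ?I" by auto
  then have set_vs: "set vs = insert w ((\<lambda>i. vs ! i) ` ?I)"
    using set_conv_nth_atLeastAtMost[OF len] w by simp
  have w_notin: "w \<notin> (\<lambda>i. vs ! i) ` ?I"
    using dist len unfolding w by (auto simp: nth_eq_iff_index_eq)
  have inj: "inj_on (\<lambda>i. vs ! i) ?I"
    using dist len by (auto simp: inj_on_def nth_eq_iff_index_eq)
  let ?B = "(\<lambda>x. - w + x) ` (\<lambda>i. vs ! i) ` ?I"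
  have "independent ?B"
    using indep affine_dependent_iff_dependent[OF w_notin] set_vs by simp
  moreover have "card ?B = CARD('n)"
  proof -
    have "card ?B = card ((\<lambda>i. vs ! i) ` ?I)" by (rule card_image) (simp add: inj_on_def)
    also have "\<dots> = CARD('n)" using card_image[OF inj] by simp
    finally show ?thesis .
  qed
  ultimately have "span ?B = UNIV"
    by (simp add: dim_eq_full[symmetric] dim_eq_card_independent)
  moreover have "?B \<subseteq> span (D ` ?I)"
  proof
    fix x assume "x \<in> ?B"
    then obtain i where i: "i \<in> ?I" and x: "x = vs ! i - w" by auto
    have "x = tag_weight g i *\<^sub>R (\<Sum>j=1..i. D j)"
      using maubach_coords_vertex[OF coords, of i] i x by simp
    also have "\<dots> \<in> span (D ` ?I)"
      using i by (intro span_mul span_sum span_base) auto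
    finally show "x \<in> span (D ` ?I)" .
  qed
  then have "span ?B \<subseteq> span (D ` ?I)" by (simp add: span_minimal)
  ultimately show ?thesis by auto
qed

section \<open>Comparison of shape ratios\<close>

lemma dual_frame_signed_rescaling:
  fixes \<Phi>0 D0 :: "nat \<Rightarrow> real^'n"
  assumes dual0: "dual_frame \<Phi>0 D0" and t: "0 < t"
    and \<pi>: "bij_betw \<pi> {1..CARD('n)} {1..CARD('n)}" and s: "\<forall>j. s j = 1 \<or> s j = -1"
  shows "dual_frame (\<lambda>j. (s j / t) *\<^sub>R \<Phi>0 (\<pi> j)) (\<lambda>j. (s j * t) *\<^sub>R D0 (\<pi> j))"
proof -
  let ?I = "{1..CARD('n)}"
  have ss: "s j * s j = 1" for j using s by (metis mult_1 mult_minus1 minus_minus)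
  have \<pi>I: "\<pi> j \<in> ?I" if "j \<in> ?I" for j using \<pi> that bij_betwE by blast
  have "((s i / t) *\<^sub>R \<Phi>0 (\<pi> i)) \<bullet> ((s j * t) *\<^sub>R D0 (\<pi> j)) = (if i = j then 1 else 0)"
    if "i \<in> ?I" "j \<in> ?I" for i j
  proof -
    have "((s i / t) *\<^sub>R \<Phi>0 (\<pi> i)) \<bullet> ((s j * t) *\<^sub>R D0 (\<pi> j)) =
        (s i / t * (s j * t)) * (\<Phi>0 (\<pi> i) \<bullet> D0 (\<pi> j))"
      by simp
    also have "\<Phi>0 (\<pi> i) \<bullet> D0 (\<pi> j) = (if i = j then 1 else 0)"
      using dual_frame_inner[OF dual0 \<pi>I[OF that(1)] \<pi>I[OF that(2)]]
        bij_betw_imp_inj_on[OF \<pi>] that by (auto dest: inj_onD)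
    finally show ?thesis using ss[of i] t by (cases "i = j") (auto simp: field_simps)
  qed
  moreover have "(\<Sum>j\<in>?I. ((s j / t) *\<^sub>R \<Phi>0 (\<pi> j) \<bullet> x) *\<^sub>R (s j * t) *\<^sub>R D0 (\<pi> j)) = x" for x
  proof -
    have "(\<Sum>j\<in>?I. ((s j / t) *\<^sub>R \<Phi>0 (\<pi> j) \<bullet> x) *\<^sub>R (s j * t) *\<^sub>R D0 (\<pi> j)) =
        (\<Sum>j\<in>?I. (\<Phi>0 (\<pi> j) \<bullet> x) *\<^sub>R D0 (\<pi> j))"
      using ss t by (intro sum.cong) (simp_all add: field_simps)
    also have "\<dots> = (\<Sum>l\<in>?I. (\<Phi>0 l \<bullet> x) *\<^sub>R D0 l)"
      by (rule sum.reindex_bij_betw[OF \<pi>])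
    finally show ?thesis using dual_frame_expansion[OF dual0] by simp
  qed
  ultimately show ?thesis unfolding dual_frame_def by blast
qed

lemma sum_mult_sum_inverse_le:
  fixes q :: "'i \<Rightarrow> real"
  assumes "finite A" "0 < a" "\<And>j. j \<in> A \<Longrightarrow> a \<le> q j \<and> q j \<le> b"
  shows "(\<Sum>j\<in>A. q j) * (\<Sum>j\<in>A. 1 / q j) \<le> (a + b)\<^sup>2 / (4 * a * b) * (card A)\<^sup>2"
proof (cases "A = {}")
  case False
  define X where "X = (\<Sum>j\<in>A. q j)"
  define Z where "Z = (\<Sum>j\<in>A. 1 / q j)"
  have q_pos: "0 < q j" if "j \<in> A" for j using assms(2) assms(3)[OF that] by linarith
  have ab: "0 < a * b" using False assms(2,3) by fastforce
  have "q j + a * b / q j \<le> a + b" if "j \<in> A" for j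
  proof -
    have "0 \<le> (b - q j) * (q j - a)" using assms(3)[OF that] by simp
    then have "q j * q j + a * b \<le> (a + b) * q j" by (simp add: algebra_simps)
    then show ?thesis using q_pos[OF that] by (simp add: field_simps)
  qed
  then have "(\<Sum>j\<in>A. q j + a * b / q j) \<le> (\<Sum>j\<in>A. a + b)" by (rule sum_mono)
  moreover have "(\<Sum>j\<in>A. q j + a * b / q j) = X + a * b * Z"
    by (simp add: X_def Z_def sum.distrib sum_distrib_left)
  moreover have "0 \<le> X" "0 \<le> Z"
    using q_pos by (auto simp: X_def Z_def less_imp_le intro!: sum_nonneg)
  ultimately have "(X + a * b * Z)\<^sup>2 \<le> ((a + b) * card A)\<^sup>2"
    using ab by (intro power_mono) (simp_all add: mult.commute)
  moreover have "4 * (a * b) * (X * Z) \<le> (X + a * b * Z)\<^sup>2"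
    using zero_le_power2[of "X - a * b * Z"] by (simp add: power2_eq_square algebra_simps)
  ultimately have "X * Z \<le> ((a + b) * card A)\<^sup>2 / (4 * (a * b))"
    using ab by (simp add: pos_le_divide_eq mult.commute)
  then show ?thesis by (simp add: X_def Z_def power_mult_distrib mult.assoc)
qed simp

lemma outer_diam_le_signed_rescaling:
  fixes vs0 vs :: "(real^'n) list"
  assumes coords0: "maubach_coords vs0 g0 w0 D0"
    and coords: "maubach_coords vs g w (\<lambda>j. (s j * t) *\<^sub>R D0 (\<pi> j))"
    and t: "0 < t" and \<pi>: "bij_betw \<pi> {1..CARD('n)} {1..CARD('n)}" and s: "\<forall>j. s j = 1 \<or> s j = -1"
  shows "outer_diam (convex hull (set vs)) \<le>
    t * outer_diam (convex hull (set vs0)) * (\<Sum>j=1..CARD('n). tag_weight g j / tag_weight g0 (\<pi> j))"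
proof -
  let ?R0 = "outer_diam (convex hull (set vs0))"
  have "outer_diam (convex hull (set vs)) \<le>
      (\<Sum>j=1..CARD('n). tag_weight g j * norm ((s j * t) *\<^sub>R D0 (\<pi> j)))"
    by (rule outer_diam_le_coords[OF coords])
  also have "\<dots> \<le> (\<Sum>j=1..CARD('n). t * ?R0 * (tag_weight g j / tag_weight g0 (\<pi> j)))"
  proof (rule sum_mono)
    fix j assume "j \<in> {1..CARD('n)}"
    then have \<pi>j: "1 \<le> \<pi> j" "\<pi> j \<le> CARD('n)" using \<pi> bij_betwE by fastforce+
    have "\<bar>s j\<bar> = 1" using s by (metis abs_1 abs_minus_cancel)
    then have "tag_weight g j * norm ((s j * t) *\<^sub>R D0 (\<pi> j)) =
        t * (tag_weight g j / tag_weight g0 (\<pi> j)) * (tag_weight g0 (\<pi> j) * norm (D0 (\<pi> j)))"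
      using t tag_weight_pos[of g0 "\<pi> j"] by (simp add: abs_mult)
    also have "\<dots> \<le> t * (tag_weight g j / tag_weight g0 (\<pi> j)) * ?R0"
      using edge_le_outer_diam[OF coords0 \<pi>j] t tag_weight_pos[of g0 "\<pi> j"] tag_weight_pos[of g j]
      by (intro mult_left_mono) auto
    finally show "tag_weight g j * norm ((s j * t) *\<^sub>R D0 (\<pi> j)) \<le>
        t * ?R0 * (tag_weight g j / tag_weight g0 (\<pi> j))" by (simp add: mult_ac)
  qed
  also have "\<dots> = t * ?R0 * (\<Sum>j=1..CARD('n). tag_weight g j / tag_weight g0 (\<pi> j))"
    by (simp add: sum_distrib_left)
  finally show ?thesis .
qed

lemma sum_bary_lipschitz_le_signed_rescaling:
  fixes vs0 :: "(real^'n) list" and \<Phi>0 D0 :: "nat \<Rightarrow> real^'n"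
  assumes coords0: "maubach_coords vs0 g0 w0 D0" and dual0: "dual_frame \<Phi>0 D0"
    and r0: "0 < inner_diam (convex hull (set vs0))" and g: "1 \<le> g" "g \<le> CARD('n)"
    and t: "0 < t" and \<pi>: "bij_betw \<pi> {1..CARD('n)} {1..CARD('n)}" and s: "\<forall>j. s j = 1 \<or> s j = -1"
  shows "(\<Sum>i=0..CARD('n). bary_lipschitz g (\<lambda>j. (s j / t) *\<^sub>R \<Phi>0 (\<pi> j)) i) \<le>
    5 / (2 * t * inner_diam (convex hull (set vs0))) *
      (\<Sum>j=1..CARD('n). tag_weight g0 (\<pi> j) / tag_weight g j)"
proof -
  let ?r0 = "inner_diam (convex hull (set vs0))"
  have "(\<Sum>i=0..CARD('n). bary_lipschitz g (\<lambda>j. (s j / t) *\<^sub>R \<Phi>0 (\<pi> j)) i) \<le>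
      5/2 * (\<Sum>j=1..CARD('n). norm ((s j / t) *\<^sub>R \<Phi>0 (\<pi> j)) / tag_weight g j)"
    by (rule sum_bary_lipschitz_le[OF g])
  also have "(\<Sum>j=1..CARD('n). norm ((s j / t) *\<^sub>R \<Phi>0 (\<pi> j)) / tag_weight g j) \<le>
      (\<Sum>j=1..CARD('n). 1 / (t * ?r0) * (tag_weight g0 (\<pi> j) / tag_weight g j))"
  proof (rule sum_mono)
    fix j assume "j \<in> {1..CARD('n)}"
    then have \<pi>j: "\<pi> j \<in> {1..CARD('n)}" using \<pi> bij_betwE by blast
    have "?r0 * norm (\<Phi>0 (\<pi> j)) \<le> tag_weight g0 (\<pi> j)"
      using inner_diam_le_dual[OF coords0 dual0 \<pi>j] dual_frame_nonzero[OF dual0 \<pi>j]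
      by (simp add: le_divide_eq)
    then have "norm (\<Phi>0 (\<pi> j)) \<le> tag_weight g0 (\<pi> j) / ?r0"
      using r0 by (simp add: le_divide_eq mult.commute)
    moreover have "\<bar>s j\<bar> = 1" using s by (metis abs_1 abs_minus_cancel)
    ultimately show "norm ((s j / t) *\<^sub>R \<Phi>0 (\<pi> j)) / tag_weight g j \<le>
        1 / (t * ?r0) * (tag_weight g0 (\<pi> j) / tag_weight g j)"
      using t r0 tag_weight_pos[of g j] by (simp add: divide_right_mono field_simps)
  qed
  also have "(\<Sum>j=1..CARD('n). 1 / (t * ?r0) * (tag_weight g0 (\<pi> j) / tag_weight g j)) =
      1 / (t * ?r0) * (\<Sum>j=1..CARD('n). tag_weight g0 (\<pi> j) / tag_weight g j)"
    by (rule sum_distrib_left[symmetric])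
  finally show ?thesis by (simp add: mult.assoc)
qed

lemma shape_ratio_le_sum_mult_sum:
  fixes vs0 vs :: "(real^'n) list"
  assumes coords0: "maubach_coords vs0 g0 w0 D0" and g0: "g0 \<le> CARD('n)"
    and dual0: "dual_frame \<Phi>0 D0"
    and coords: "maubach_coords vs g w (\<lambda>j. (s j * t) *\<^sub>R D0 (\<pi> j))" and g: "1 \<le> g" "g \<le> CARD('n)"
    and t: "0 < t" and \<pi>: "bij_betw \<pi> {1..CARD('n)} {1..CARD('n)}" and s: "\<forall>j. s j = 1 \<or> s j = -1"
  shows "shape_ratio vs \<le> 5/4 * ((\<Sum>j=1..CARD('n). tag_weight g j / tag_weight g0 (\<pi> j)) *
    (\<Sum>j=1..CARD('n). tag_weight g0 (\<pi> j) / tag_weight g j)) * shape_ratio vs0"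
proof -
  define \<Phi> where "\<Phi> j = (s j / t) *\<^sub>R \<Phi>0 (\<pi> j)" for j
  have dual: "dual_frame \<Phi> (\<lambda>j. (s j * t) *\<^sub>R D0 (\<pi> j))"
    unfolding \<Phi>_def by (rule dual_frame_signed_rescaling[OF dual0 t \<pi> s])
  define R0 where "R0 = outer_diam (convex hull (set vs0))"
  define r0 where "r0 = inner_diam (convex hull (set vs0))"
  define R where "R = outer_diam (convex hull (set vs))"
  define r where "r = inner_diam (convex hull (set vs))"
  define N where "N = (\<Sum>i=0..CARD('n). bary_lipschitz g \<Phi> i)"
  define X where "X = (\<Sum>j=1..CARD('n). tag_weight g j / tag_weight g0 (\<pi> j))"
  define Z where "Z = (\<Sum>j=1..CARD('n). tag_weight g0 (\<pi> j) / tag_weight g j)"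
  have r0: "0 < r0" unfolding r0_def by (rule inner_diam_pos_coords[OF coords0 dual0 g0])
  have N: "0 < N" unfolding N_def by (rule sum_bary_lipschitz_pos[OF dual])
  have r: "2 / N \<le> r" unfolding N_def r_def by (rule inner_diam_ge_coords[OF coords dual g(2)])
  have R: "R \<le> t * R0 * X" unfolding R_def R0_def X_def
    by (rule outer_diam_le_signed_rescaling[OF coords0 coords t \<pi> s])
  have NZ: "N \<le> 5 / (2 * t * r0) * Z" unfolding N_def r0_def Z_def \<Phi>_def
    by (rule sum_bary_lipschitz_le_signed_rescaling[OF coords0 dual0 r0[unfolded r0_def] g t \<pi> s])
  have R0_nonneg: "0 \<le> R0" and R_nonneg: "0 \<le> R"
    unfolding R0_def R_def using maubach_coords_length[OF coords0] maubach_coords_length[OF coords]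
    by (auto intro: diam_convex_hull_nonneg)
  have two_N: "0 < 2 / N" using N by simp
  then have "0 < r" using r by linarith
  then have "R / r \<le> R / (2 / N)"
    using r R_nonneg two_N by (intro divide_left_mono mult_pos_pos)
  also have "\<dots> = R * N / 2" by simp
  also have "\<dots> \<le> (t * R0 * X) * (5 / (2 * t * r0) * Z) / 2"
  proof -
    have "0 \<le> X" unfolding X_def using tag_weight_pos
      by (intro sum_nonneg) (simp add: less_imp_le)
    then have "R * N \<le> (t * R0 * X) * (5 / (2 * t * r0) * Z)"
      using R0_nonneg t N by (intro mult_mono[OF R NZ]) simp_all
    then show ?thesis by simp
  qed
  also have "\<dots> = 5/4 * (X * Z) * (R0 / r0)"
    using t r0 by (simp add: field_simps)
  finally show ?thesis
    unfolding shape_ratio_def R_def r_def R0_def r0_def X_def Z_def .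
qed

lemma shape_ratio_le_signed_rescaling:
  fixes vs0 vs :: "(real^'n) list"
  assumes coords0: "maubach_coords vs0 g0 w0 D0" and g0: "g0 \<le> CARD('n)"
    and dual0: "dual_frame \<Phi>0 D0"
    and coords: "maubach_coords vs g w D" and g: "1 \<le> g" "g \<le> CARD('n)"
    and rescaling: "signed_rescaling CARD('n) D0 D"
  shows "shape_ratio vs \<le> 125/64 * (real CARD('n))\<^sup>2 * shape_ratio vs0"
proof -
  obtain t \<pi> s where t: "0 < t" and \<pi>: "bij_betw \<pi> {1..CARD('n)} {1..CARD('n)}"
    and s: "\<forall>j. s j = 1 \<or> s j = -1" and D: "D = (\<lambda>j. (s j * t) *\<^sub>R D0 (\<pi> j))"
    using rescaling unfolding signed_rescaling_def by blast
  define X where "X = (\<Sum>j=1..CARD('n). tag_weight g j / tag_weight g0 (\<pi> j))"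
  define Z where "Z = (\<Sum>j=1..CARD('n). tag_weight g0 (\<pi> j) / tag_weight g j)"
  have "X * Z \<le> (1/2 + 2)\<^sup>2 / (4 * (1/2) * 2) * (card {1..CARD('n)})\<^sup>2"
    unfolding X_def Z_def
    using sum_mult_sum_inverse_le[of "{1..CARD('n)}" "1/2" "\<lambda>j. tag_weight g j / tag_weight g0 (\<pi> j)" 2]
    by (simp add: tag_weight_def)
  then have "X * Z \<le> 25/16 * (real CARD('n))\<^sup>2" by (simp add: power_divide)
  moreover have "0 \<le> shape_ratio vs0"
    using maubach_coords_length[OF coords0] by (intro shape_ratio_nonneg) auto
  ultimately have "5/4 * (X * Z) * shape_ratio vs0 \<le> 125/64 * (real CARD('n))\<^sup>2 * shape_ratio vs0"
    by (intro mult_right_mono) simp_all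
  then show ?thesis
    using shape_ratio_le_sum_mult_sum[OF coords0 g0 dual0 coords[unfolded D] g t \<pi> s]
    unfolding X_def Z_def by linarith
qed

theorem theoremA1:
  fixes vs0 vs :: "(real^'n) list" and g0 g :: nat
  assumes "CARD('n) \<ge> 2"
    and "tagged_simplex vs0 g0"
    and "maubach_descendant (vs0, g0) (vs, g)"
  shows "shape_ratio vs \<le>
           2 * real CARD('n) * (real CARD('n) + sqrt 2 - 1) * shape_ratio vs0"
proof -
  let ?n = "real CARD('n)"
  have g0: "1 \<le> g0" "g0 \<le> CARD('n)" and len0: "length vs0 = CARD('n) + 1"
    using assms(2) unfolding tagged_simplex_def by auto
  obtain D0 where coords0: "maubach_coords vs0 g0 (vs0 ! 0) D0"
    using maubach_coords_of_vertices[OF len0] by blast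
  obtain \<Phi>0 where dual0: "dual_frame \<Phi>0 D0"
    using dual_frame_exists[OF tagged_simplex_span_edges[OF assms(2) coords0]] .
  obtain w D where g: "1 \<le> g" "g \<le> CARD('n)" and coords: "maubach_coords vs g w D"
    and rescaling: "signed_rescaling CARD('n) D0 D"
    using maubach_descendant_coords[OF coords0 g0 assms(3)] by auto
  have "shape_ratio vs \<le> 125/64 * ?n\<^sup>2 * shape_ratio vs0"
    by (rule shape_ratio_le_signed_rescaling[OF coords0 g0(2) dual0 coords g rescaling])
  also have "\<dots> \<le> 2 * ?n * (?n + sqrt 2 - 1) * shape_ratio vs0"
  proof (rule mult_right_mono)
    have "125/64 * ?n\<^sup>2 \<le> 2 * ?n * ?n" by (simp add: power2_eq_square)
    also have "\<dots> \<le> 2 * ?n * (?n + sqrt 2 - 1)" by (intro mult_left_mono) auto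
    finally show "125/64 * ?n\<^sup>2 \<le> 2 * ?n * (?n + sqrt 2 - 1)" .
    show "0 \<le> shape_ratio vs0" using len0 by (intro shape_ratio_nonneg) auto
  qed
  finally show ?thesis .
qed

end
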